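(* Let $n\ge 2$ and let $E\subset\mathbb{R}^n$ be a set of type $F_\sigma$ with $|E|=t$, $0<t<\infty$. Then there exist sets $E_0\supset E_1\supset\dots\supset E_n$ of type $F_\sigma$, with $E_0=E$ and $|E_j|=2^{-j}t$ for $j=0,\dots,n$, such that for every $j=1,\dots,n$ and every $F_\sigma$-set $A\subset E_{j-1}$ with $|A|\ge 2^{-j}t$, $$\operatorname{mes}_{n-1}\Pi_j(E_j)\le\operatorname{mes}_{n-1}\Pi_j(A).$$
   Context: $|\cdot|$ is $n$-dimensional Lebesgue measure. For $k=1,\dots,n$, $\Pi_k(E)$ denotes the orthogonal projection of $E$ onto the coordinate hyperplane $\{x_k=0\}$ (identified with $\mathbb{R}^{n-1}$), and $\operatorname{mes}_{n-1}$ is $(n-1)$-dimensional Lebesgue measure. *)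

theory Defs
  imports "HOL-Analysis.Analysis" "HOL-Probability.Probability"
begin

text \<open>Points of R^n are functions on the coordinate set {1..n} (extensional, i.e. elements of
  PiE {1..n} (\<lambda>_. UNIV)); R^n carries the product topology and the product Lebesgue(-Borel)
  measure.\<close>

definition Rn_top :: "nat \<Rightarrow> (nat \<Rightarrow> real) topology" where
  "Rn_top n = product_topology (\<lambda>_. euclideanreal) {1..n}"

definition Rn_meas :: "nat \<Rightarrow> (nat \<Rightarrow> real) measure" where
  "Rn_meas n = completion (Pi\<^sub>M {1..n} (\<lambda>_. lborel))"

definition Fsigma_Rn :: "nat \<Rightarrow> (nat \<Rightarrow> real) set \<Rightarrow> bool" where
  "Fsigma_Rn n E \<longleftrightarrow> fsigma_in (Rn_top n) E"

text \<open>Orthogonal projection onto the coordinate hyperplane {x_k = 0}, identified with R^(n-1)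
  (functions on the coordinate set {1..n} - {k}).\<close>
definition proj_k :: "nat \<Rightarrow> nat \<Rightarrow> (nat \<Rightarrow> real) set \<Rightarrow> (nat \<Rightarrow> real) set" where
  "proj_k n k E = (\<lambda>x. restrict x ({1..n} - {k})) ` E"

definition mes_hyp :: "nat \<Rightarrow> nat \<Rightarrow> (nat \<Rightarrow> real) set \<Rightarrow> ennreal" where
  "mes_hyp n k S = emeasure (completion (Pi\<^sub>M ({1..n} - {k}) (\<lambda>_. lborel))) S"

end

(* Each E_j is cut out of E_(j-1) by a bathtub argument in the direction x_j. Write x = (y, x_j)
   and let f(y) be the length of the fibre of E_(j-1) over y, so that the integral of f is
   2^(1-j) t. A superlevel set S of f (f >= l on S, f <= l off S) with integral of f over S
   equal to 2^(-j) t exists because ties between fibres of equal length can be broken by a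
   second coordinate y_k, whose level sets are null; this is where n >= 2 enters. Shrinking S
   by a null set to an F_sigma set S' and taking E_j to be the part of E_(j-1) over S' gives
   |E_j| = 2^(-j) t and Pi_j(E_j) within S. If A lies in E_(j-1) and |A| >= 2^(-j) t, then
   the integral of f over Pi_j(A) is at least |A|, hence at least the integral of f over S,
   and since f >= l on S and f <= l off S this forces mes Pi_j(A) >= mes S. *)

theory Submission
  imports Defs
begin

section \<open>Coordinate projections, F-sigma sets and product Lebesgue measure\<close>

abbreviation product_euclidean :: "nat set \<Rightarrow> (nat \<Rightarrow> real) topology" where
  "product_euclidean I \<equiv> product_topology (\<lambda>_. euclideanreal) I"

abbreviation product_lborel :: "nat set \<Rightarrow> (nat \<Rightarrow> real) measure" where
  "product_lborel I \<equiv> Pi\<^sub>M I (\<lambda>_. lborel)"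

lemma continuous_map_restrict_euclidean:
  "continuous_map euclidean (product_euclidean I) (\<lambda>x. restrict x I)"
  by (auto simp: continuous_map_componentwise euclidean_product_topology[symmetric]
      intro: continuous_map_product_projection)

lemma continuous_map_restrict_product_euclidean:
  "J \<subseteq> I \<Longrightarrow> continuous_map (product_euclidean I) (product_euclidean J) (\<lambda>x. restrict x J)"
  by (auto simp: continuous_map_componentwise intro: continuous_map_product_projection)

lemma measurable_product_lborel_borel: "(\<lambda>x. x) \<in> measurable (product_lborel I) borel"
proof (rule measurable_coordinatewise_then_product)
  fix i
  show "(\<lambda>x. x i) \<in> borel_measurable (product_lborel I)"
  proof (cases "i \<in> I")
    case True
    then show ?thesis by measurable
  next
    case False
    then have "(\<lambda>x. x i) \<in> borel_measurable (product_lborel I) \<longleftrightarrow>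
               (\<lambda>x. undefined :: real) \<in> borel_measurable (product_lborel I)"
      by (intro measurable_cong) (auto simp: space_PiM PiE_def extensional_def)
    then show ?thesis by simp
  qed
qed

lemma measurable_restrict_borel_product_lborel:
  "(\<lambda>x. restrict x I) \<in> measurable (borel :: (nat \<Rightarrow> real) measure) (product_lborel I)"
proof -
  have "sets (product_lborel UNIV) = sets (Pi\<^sub>M UNIV (\<lambda>_::nat. borel :: real measure))"
    by (rule sets_PiM_cong) auto
  also have "\<dots> = sets borel" by (rule sets_PiM_equal_borel)
  finally have "sets (product_lborel UNIV) = sets (borel :: (nat \<Rightarrow> real) measure)" .
  moreover have "(\<lambda>x. restrict x I) \<in> measurable (product_lborel UNIV) (product_lborel I)"
    by (rule measurable_restrict_subset) auto
  ultimately show ?thesis using measurable_cong_sets by blast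
qed

lemma closed_PiE_UNIV: "closed (PiE I (\<lambda>_. UNIV) :: (nat \<Rightarrow> real) set)"
proof -
  have "PiE I (\<lambda>_. UNIV) = (\<Inter>i\<in>-I. {x :: nat \<Rightarrow> real. x i = undefined})"
    by (auto simp: PiE_def extensional_def)
  moreover have "closed {x :: nat \<Rightarrow> real. x i = undefined}" for i
    by (intro closed_Collect_eq continuous_on_product_coordinates continuous_on_const)
  ultimately show ?thesis by auto
qed

lemma sets_product_lborel_imp_borel: "X \<in> sets (product_lborel I) \<Longrightarrow> X \<in> sets borel"
proof -
  assume X: "X \<in> sets (product_lborel I)"
  have "X = ((\<lambda>x. restrict x I) -` X \<inter> space borel) \<inter> PiE I (\<lambda>_. UNIV)"
    using sets.sets_into_space[OF X] by (auto simp: space_PiM PiE_restrict)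
  moreover have "(\<lambda>x. restrict x I) -` X \<inter> space borel \<in> sets borel"
    using measurable_sets[OF measurable_restrict_borel_product_lborel X] .
  ultimately show ?thesis using closed_PiE_UNIV by (metis borel_closed sets.Int)
qed

lemma borel_imp_sets_product_lborel:
  "X \<in> sets borel \<Longrightarrow> X \<subseteq> PiE I (\<lambda>_. UNIV) \<Longrightarrow> X \<in> sets (product_lborel I)"
  using measurable_sets[OF measurable_product_lborel_borel, of X I]
  by (simp add: space_PiM Int_absorb2)

lemma closedin_product_euclidean_imp_closed:
  assumes C: "closedin (product_euclidean I) C"
  shows "closed C"
proof -
  have "closedin euclidean {x \<in> topspace euclidean. restrict x I \<in> C}"
    using closedin_continuous_map_preimage[OF continuous_map_restrict_euclidean C] .
  then have "closed {x. restrict x I \<in> C}" by simp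
  moreover have "C = {x. restrict x I \<in> C} \<inter> PiE I (\<lambda>_. UNIV)"
    using closedin_subset[OF C] by (auto simp: topspace_product_topology PiE_restrict)
  ultimately show ?thesis using closed_PiE_UNIV by (metis closed_Int)
qed

lemma closedin_imp_sets_product_lborel:
  "closedin (product_euclidean I) C \<Longrightarrow> C \<in> sets (product_lborel I)"
  using closedin_subset[of "product_euclidean I" C]
  by (intro borel_imp_sets_product_lborel borel_closed closedin_product_euclidean_imp_closed)
     (auto simp: topspace_product_topology)

lemma fsigma_in_imp_sets_product_lborel:
  assumes "fsigma_in (product_euclidean I) C"
  shows "C \<in> sets (product_lborel I)"
proof -
  obtain \<C> where "countable \<C>" "\<And>c. c \<in> \<C> \<Longrightarrow> closedin (product_euclidean I) c" "C = \<Union>\<C>"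
    using assms unfolding fsigma_in_def union_of_def by auto
  then show ?thesis by (auto intro: sets.countable_Union closedin_imp_sets_product_lborel)
qed

lemma compact_imp_closedin_product_euclidean:
  assumes K: "compact K" "K \<subseteq> PiE I (\<lambda>_. UNIV)"
  shows "closedin (product_euclidean I) K"
proof -
  have "(\<lambda>x. restrict x I) ` K = K"
    using K(2) by (force simp: PiE_restrict image_iff)
  moreover have "compactin (product_euclidean I) ((\<lambda>x. restrict x I) ` K)"
    using K(1) by (intro image_compactin[OF _ continuous_map_restrict_euclidean]) simp
  ultimately show ?thesis
    by (metis Hausdorff_space_euclidean Hausdorff_space_product_topology compactin_imp_closedin)
qed

lemma fsigma_in_restrict_image_closedin:
  assumes C: "closedin (product_euclidean I) C" and J: "J \<subseteq> I" and I: "finite I"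
  shows "fsigma_in (product_euclidean J) ((\<lambda>x. restrict x J) ` C)"
proof -
  define K where "K m = C \<inter> PiE I (\<lambda>_. {-real m..real m})" for m :: nat
  have "compactin (product_euclidean I) (K m)" for m
    unfolding K_def by (intro closed_Int_compactin C) (simp add: compactin_PiE)
  then have "compactin (product_euclidean J) ((\<lambda>x. restrict x J) ` K m)" for m
    by (rule image_compactin[OF _ continuous_map_restrict_product_euclidean[OF J]])
  then have closed_image: "closedin (product_euclidean J) ((\<lambda>x. restrict x J) ` K m)" for m
    by (rule compactin_imp_closedin[rotated]) (simp add: Hausdorff_space_product_topology)
  have "C \<subseteq> (\<Union>m. K m)"
  proof
    fix x assume x: "x \<in> C"
    obtain m :: nat where m: "(\<Sum>i\<in>I. \<bar>x i\<bar>) \<le> m"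
      using real_arch_simple by blast
    have "\<bar>x i\<bar> \<le> m" if "i \<in> I" for i
      using m member_le_sum[OF that, of "\<lambda>i. \<bar>x i\<bar>"] I by force
    then have "x \<in> K m"
      using x closedin_subset[OF C] by (force simp: K_def PiE_def abs_le_iff)
    then show "x \<in> (\<Union>m. K m)" by blast
  qed
  then have "C = (\<Union>m. K m)"
    by (auto simp: K_def)
  then have "(\<lambda>x. restrict x J) ` C = (\<Union>m. (\<lambda>x. restrict x J) ` K m)"
    by (metis image_UN)
  moreover have "fsigma_in (product_euclidean J) (\<Union>m. (\<lambda>x. restrict x J) ` K m)"
    by (rule fsigma_in_Union) (auto intro: closed_imp_fsigma_in closed_image)
  ultimately show ?thesis by simp
qed

lemma fsigma_in_restrict_image:
  assumes A: "fsigma_in (product_euclidean I) A" and J: "J \<subseteq> I" and I: "finite I"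
  shows "fsigma_in (product_euclidean J) ((\<lambda>x. restrict x J) ` A)"
proof -
  obtain \<C> where \<C>: "countable \<C>" "\<And>C. C \<in> \<C> \<Longrightarrow> closedin (product_euclidean I) C" "A = \<Union>\<C>"
    using A unfolding fsigma_in_def union_of_def by auto
  then have "(\<lambda>x. restrict x J) ` A = (\<Union>C\<in>\<C>. (\<lambda>x. restrict x J) ` C)"
    by auto
  moreover have "fsigma_in (product_euclidean J) (\<Union>C\<in>\<C>. (\<lambda>x. restrict x J) ` C)"
    using \<C> by (intro fsigma_in_Union) (auto intro: fsigma_in_restrict_image_closedin[OF _ J I])
  ultimately show ?thesis by simp
qed

lemma fsigma_in_restrict_preimage:
  assumes S: "fsigma_in (product_euclidean J) S" and J: "J \<subseteq> I"
  shows "fsigma_in (product_euclidean I) {x \<in> topspace (product_euclidean I). restrict x J \<in> S}"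
proof -
  obtain \<C> where \<C>: "countable \<C>" "\<And>C. C \<in> \<C> \<Longrightarrow> closedin (product_euclidean J) C" "S = \<Union>\<C>"
    using S unfolding fsigma_in_def union_of_def by auto
  let ?pre = "\<lambda>C. {x \<in> topspace (product_euclidean I). restrict x J \<in> C}"
  have "{x \<in> topspace (product_euclidean I). restrict x J \<in> S} = \<Union>(?pre ` \<C>)"
    using \<C>(3) by auto
  moreover have "fsigma_in (product_euclidean I) (\<Union>(?pre ` \<C>))"
    using \<C>(1,2) continuous_map_restrict_product_euclidean[OF J]
    by (intro fsigma_in_Union)
       (auto intro!: closed_imp_fsigma_in closedin_continuous_map_preimage
             simp del: topspace_product_topology)
  ultimately show ?thesis by simp
qed

lemma inner_compact_approx_product_lborel:
  assumes S: "S \<in> sets (product_lborel I)" "emeasure (product_lborel I) S < \<infinity>" and e: "0 < e"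
  shows "\<exists>K. compact K \<and> K \<subseteq> S \<and> emeasure (product_lborel I) (S - K) \<le> ennreal e"
proof -
  let ?M = "product_lborel I"
  define M' where "M' = distr (density ?M (indicator S)) borel (\<lambda>x. x)"
  have M'_measurable: "(\<lambda>x. x) \<in> measurable (density ?M (indicator S)) borel"
    using measurable_product_lborel_borel by (subst measurable_cong_sets[OF sets_density refl]) simp
  have emeasure_M': "emeasure M' X = emeasure ?M (S \<inter> X)" if X: "X \<in> sets borel" for X
  proof -
    have X': "X \<inter> space ?M \<in> sets ?M"
      using measurable_sets[OF measurable_product_lborel_borel X] by (simp add: Int_commute)
    have "emeasure M' X = emeasure (density ?M (indicator S)) (X \<inter> space ?M)"
      unfolding M'_def using X M'_measurable by (simp add: emeasure_distr Int_commute)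
    also have "\<dots> = emeasure ?M (S \<inter> (X \<inter> space ?M))"
      by (rule emeasure_restricted[OF S(1) X'])
    also have "S \<inter> (X \<inter> space ?M) = S \<inter> X"
      using sets.sets_into_space[OF S(1)] by auto
    finally show ?thesis .
  qed
  have S_borel: "S \<in> sets borel"
    using sets_product_lborel_imp_borel[OF S(1)] .
  have "emeasure M' (space M') \<noteq> \<infinity>"
    using emeasure_M'[of UNIV] S(2) by (simp add: M'_def)
  then have regular: "emeasure M' S = (SUP K \<in> {K. K \<subseteq> S \<and> compact K}. emeasure M' K)"
    by (intro inner_regular S_borel) (simp add: M'_def)
  have "emeasure M' S \<noteq> \<infinity>"
    using emeasure_M'[OF S_borel] S(2) by simp
  then obtain K where K: "K \<subseteq> S" "compact K" "emeasure M' S < emeasure M' K + ennreal e"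
    using SUP_approx_ennreal[OF e _ regular] by (metis (no_types, lifting) empty_iff empty_subsetI
        compact_empty mem_Collect_eq)
  have K_sets: "K \<in> sets ?M"
    using K sets.sets_into_space[OF S(1)]
    by (intro borel_imp_sets_product_lborel) (auto simp: borel_compact space_PiM)
  have "emeasure ?M K + emeasure ?M (S - K) = emeasure ?M S"
    using K(1) K_sets S(1) by (subst plus_emeasure) (auto simp: Un_absorb1)
  also have "\<dots> \<le> emeasure ?M K + ennreal e"
    using K emeasure_M'[OF S_borel] emeasure_M'[of K] by (simp add: borel_compact Int_absorb1)
  finally have "emeasure ?M K + emeasure ?M (S - K) \<le> emeasure ?M K + ennreal e" .
  moreover have "emeasure ?M K \<noteq> \<infinity>"
    using emeasure_mono[OF K(1) S(1)] S(2) by (auto simp: top_unique)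
  ultimately show ?thesis
    using K by (intro exI[of _ K]) (simp add: ennreal_add_left_cancel_le)
qed

lemma fsigma_inner_approx_product_lborel:
  assumes S: "S \<in> sets (product_lborel I)" "emeasure (product_lborel I) S < \<infinity>"
  shows "\<exists>S'. fsigma_in (product_euclidean I) S' \<and> S' \<subseteq> S \<and> S - S' \<in> null_sets (product_lborel I)"
proof -
  let ?M = "product_lborel I"
  have "\<forall>m::nat. \<exists>K. compact K \<and> K \<subseteq> S \<and> emeasure ?M (S - K) \<le> ennreal (1 / Suc m)"
    using inner_compact_approx_product_lborel[OF S] by simp
  then obtain K where K: "\<And>m. compact (K m)" "\<And>m. K m \<subseteq> S"
    "\<And>m::nat. emeasure ?M (S - K m) \<le> ennreal (1 / Suc m)"
    by metis
  have closed: "closedin (product_euclidean I) (K m)" for m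
    using K(1,2)[of m] sets.sets_into_space[OF S(1)]
    by (intro compact_imp_closedin_product_euclidean) (auto simp: space_PiM)
  then have fsigma: "fsigma_in (product_euclidean I) (\<Union>m. K m)"
    by (intro fsigma_in_Union) (auto intro: closed_imp_fsigma_in)
  have diff_sets: "S - (\<Union>m. K m) \<in> sets ?M"
    using S(1) fsigma_in_imp_sets_product_lborel[OF fsigma] by blast
  have "emeasure ?M (S - (\<Union>m. K m)) \<le> 0"
  proof (rule ennreal_le_epsilon)
    fix e :: real assume "0 < e"
    then obtain m :: nat where m: "1 / Suc m < e"
      by (metis nat_approx_posE of_nat_Suc)
    have "emeasure ?M (S - (\<Union>m. K m)) \<le> emeasure ?M (S - K m)"
      using S(1) closedin_imp_sets_product_lborel[OF closed] by (intro emeasure_mono) auto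
    also have "\<dots> \<le> ennreal (1 / Suc m)" by (rule K(3))
    also have "\<dots> \<le> 0 + ennreal e" using m by (simp add: ennreal_leI)
    finally show "emeasure ?M (S - (\<Union>m. K m)) \<le> 0 + ennreal e" .
  qed
  then show ?thesis
    using fsigma K(2) diff_sets by (intro exI[of _ "\<Union>m. K m"]) auto
qed

section \<open>Level sets and the bathtub principle\<close>

lemma UN_greaterThan_eq_UN_seq:
  fixes S :: "real \<Rightarrow> 'a set"
  assumes "\<And>p q. p \<le> q \<Longrightarrow> S q \<subseteq> S p"
  shows "(\<Union>q\<in>{p<..}. S q) = (\<Union>m. S (p + 1 / Suc m))"
proof
  show "(\<Union>q\<in>{p<..}. S q) \<subseteq> (\<Union>m. S (p + 1 / Suc m))"
  proof
    fix x assume "x \<in> (\<Union>q\<in>{p<..}. S q)"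
    then obtain q where q: "p < q" "x \<in> S q" by auto
    then obtain m :: nat where "1 / Suc m < q - p"
      by (metis diff_gt_0_iff_gt nat_approx_posE of_nat_Suc)
    then have "S q \<subseteq> S (p + 1 / Suc m)" by (intro assms) simp
    then show "x \<in> (\<Union>m. S (p + 1 / Suc m))" using q by blast
  qed
next
  show "(\<Union>m. S (p + 1 / Suc m)) \<subseteq> (\<Union>q\<in>{p<..}. S q)"
    by (intro UN_least) (force simp del: of_nat_Suc)
qed

lemma INT_lessThan_eq_INT_seq:
  fixes S :: "real \<Rightarrow> 'a set"
  assumes "\<And>p q. p \<le> q \<Longrightarrow> S q \<subseteq> S p"
  shows "(\<Inter>q\<in>{..<p}. S q) = (\<Inter>m. S (p - 1 / Suc m))"
proof
  show "(\<Inter>m. S (p - 1 / Suc m)) \<subseteq> (\<Inter>q\<in>{..<p}. S q)"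
  proof
    fix x assume x: "x \<in> (\<Inter>m. S (p - 1 / Suc m))"
    have "x \<in> S q" if "q < p" for q
    proof -
      obtain m :: nat where "1 / Suc m < p - q"
        using \<open>q < p\<close> by (metis diff_gt_0_iff_gt nat_approx_posE of_nat_Suc)
      then have "S (p - 1 / Suc m) \<subseteq> S q" by (intro assms) simp
      then show ?thesis using x by blast
    qed
    then show "x \<in> (\<Inter>q\<in>{..<p}. S q)" by blast
  qed
next
  show "(\<Inter>q\<in>{..<p}. S q) \<subseteq> (\<Inter>m. S (p - 1 / Suc m))"
    by (intro INT_greatest) (force simp del: of_nat_Suc)
qed

lemma emeasure_threshold_crossing:
  fixes N :: "'a measure" and S :: "real \<Rightarrow> 'a set" and c :: ennreal
  assumes S_sets: "\<And>p. S p \<in> sets N" and S_finite: "\<And>p. emeasure N (S p) \<noteq> \<infinity>"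
    and S_antimono: "\<And>p q. p \<le> q \<Longrightarrow> S q \<subseteq> S p"
    and a: "c \<le> emeasure N (S a)" and b: "emeasure N (S b) < c"
  shows "\<exists>p\<ge>a. emeasure N (\<Union>q\<in>{p<..}. S q) \<le> c \<and> c \<le> emeasure N (\<Inter>q\<in>{..<p}. S q)"
proof -
  define T where "T = {p. c \<le> emeasure N (S p)}"
  have "a \<in> T" using a by (simp add: T_def)
  have below_b: "p < b" if "p \<in> T" for p
  proof (rule ccontr)
    assume "\<not> p < b"
    then have "emeasure N (S p) \<le> emeasure N (S b)"
      using S_antimono[of b p] S_sets by (intro emeasure_mono) auto
    then show False using that b by (simp add: T_def)
  qed
  then have bdd: "bdd_above T" by (meson bdd_aboveI less_imp_le)
  define p where "p = Sup T"
  have "a \<le> p" unfolding p_def using \<open>a \<in> T\<close> bdd by (rule cSup_upper)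
  have above: "emeasure N (S (p + 1 / Suc m)) \<le> c" for m :: nat
  proof -
    have "p + 1 / Suc m \<notin> T"
      using cSup_upper[OF _ bdd, of "p + 1 / Suc m"] by (auto simp: p_def)
    then show ?thesis by (simp add: T_def)
  qed
  have below: "c \<le> emeasure N (S (p - 1 / Suc m))" for m :: nat
  proof -
    obtain q where q: "q \<in> T" "p - 1 / Suc m < q"
      using less_cSup_iff[OF _ bdd, of "p - 1 / Suc m"] \<open>a \<in> T\<close> by (auto simp: p_def)
    have "emeasure N (S q) \<le> emeasure N (S (p - 1 / Suc m))"
      using S_antimono[of "p - 1 / Suc m" q] q(2) S_sets by (intro emeasure_mono) auto
    then show ?thesis using q(1) by (simp add: T_def)
  qed
  have "emeasure N (\<Union>m. S (p + 1 / Suc m)) = (SUP m. emeasure N (S (p + 1 / Suc m)))"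
    using S_sets by (intro SUP_emeasure_incseq[symmetric]) (auto intro!: monoI S_antimono frac_le)
  also have "\<dots> \<le> c" using above by (rule SUP_least)
  finally have upper: "emeasure N (\<Union>q\<in>{p<..}. S q) \<le> c"
    by (simp only: UN_greaterThan_eq_UN_seq[OF S_antimono])
  have "c \<le> (INF m. emeasure N (S (p - 1 / Suc m)))"
    using below by (rule INF_greatest)
  also have "\<dots> = emeasure N (\<Inter>m. S (p - 1 / Suc m))"
    using S_sets S_finite by (intro INF_emeasure_decseq) (auto intro!: antimonoI S_antimono frac_le)
  finally have "c \<le> emeasure N (\<Inter>q\<in>{..<p}. S q)"
    by (simp only: INT_lessThan_eq_INT_seq[OF S_antimono])
  with upper show ?thesis using \<open>a \<le> p\<close> by blast
qed

lemma ennreal_less_iff_ex_real_less: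
  assumes "0 \<le> l"
  shows "ennreal l < x \<longleftrightarrow> (\<exists>q>l. ennreal q < x)"
proof
  assume "ennreal l < x"
  then obtain z where z: "ennreal l < z" "z < x" using dense by blast
  have "z < top" using less_le_trans[OF z(2) top_greatest] .
  then have "l < enn2real z" using ennreal_less_iff[OF assms, of "enn2real z"] z(1) by simp
  then show "\<exists>q>l. ennreal q < x" using z(2) \<open>z < top\<close> by auto
next
  assume "\<exists>q>l. ennreal q < x"
  then obtain q where "l < q" "ennreal q < x" by blast
  then have "ennreal l \<le> ennreal q" by (simp add: ennreal_leI)
  then show "ennreal l < x" using \<open>ennreal q < x\<close> by (rule le_less_trans)
qed

lemma ennreal_le_iff_all_real_less:
  assumes "0 < l"
  shows "ennreal l \<le> x \<longleftrightarrow> (\<forall>q<l. ennreal q < x)"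
proof
  assume "ennreal l \<le> x"
  show "\<forall>q<l. ennreal q < x"
  proof (intro allI impI)
    fix q assume "q < l"
    then have "ennreal q < ennreal l" by (rule ennreal_lessI[OF assms])
    then show "ennreal q < x" using \<open>ennreal l \<le> x\<close> by (rule less_le_trans)
  qed
next
  assume less: "\<forall>q<l. ennreal q < x"
  show "ennreal l \<le> x"
  proof (rule dense_le)
    fix z assume "z < ennreal l"
    then have z_finite: "z < top" using less_le_trans[OF _ top_greatest] by blast
    then have "enn2real z < l"
      using ennreal_less_iff[OF enn2real_nonneg, of z l] \<open>z < ennreal l\<close> by simp
    then have "ennreal (enn2real z) < x" by (rule less[rule_format])
    then show "z \<le> x" using z_finite by simp
  qed
qed

lemma emeasure_density_superlevel_gt:
  fixes f :: "'a \<Rightarrow> ennreal"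
  assumes f[measurable]: "f \<in> borel_measurable M" and c: "c < (\<integral>\<^sup>+y. f y \<partial>M)"
  shows "\<exists>m::nat. c < emeasure (density M f) {y \<in> space M. ennreal (1 / Suc m) < f y}"
proof -
  let ?U = "\<lambda>p::real. {y \<in> space M. ennreal p < f y}"
  have U_antimono: "?U q \<subseteq> ?U p" if "p \<le> q" for p q
    using that by (auto intro: le_less_trans[OF ennreal_leI])
  have "0 < x \<longleftrightarrow> (\<exists>q>0. ennreal q < x)" for x
    using ennreal_less_iff_ex_real_less[of 0 x] by simp
  then have "(\<Union>q\<in>{0<..}. ?U q) = ?U 0"
    by auto
  then have "(\<Union>m. ?U (1 / Suc m)) = ?U 0"
    using UN_greaterThan_eq_UN_seq[OF U_antimono, where p=0] by simp
  then have "(SUP m. emeasure (density M f) (?U (1 / Suc m))) = emeasure (density M f) (?U 0)"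
    by (subst SUP_emeasure_incseq) (auto intro!: monoI U_antimono frac_le)
  also have "\<dots> = (\<integral>\<^sup>+y. f y \<partial>M)"
    by (auto simp: emeasure_density indicator_def intro!: nn_integral_cong)
  finally have "c < (SUP m. emeasure (density M f) (?U (1 / Suc m)))"
    using c by simp
  then show ?thesis
    by (simp add: less_SUP_iff)
qed

lemma emeasure_density_superlevel_lt:
  fixes f :: "'a \<Rightarrow> ennreal"
  assumes f[measurable]: "f \<in> borel_measurable M"
    and f_finite: "(\<integral>\<^sup>+y. f y \<partial>M) < \<infinity>" and c: "0 < c"
  shows "\<exists>m::nat. emeasure (density M f) {y \<in> space M. ennreal (real m) < f y} < c"
proof -
  let ?U = "\<lambda>m::nat. {y \<in> space M. ennreal (real m) < f y}"
  have "(\<forall>m::nat. ennreal (real m) < x) \<longleftrightarrow> x = \<infinity>" for x :: ennreal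
  proof
    assume less: "\<forall>m::nat. ennreal (real m) < x"
    show "x = \<infinity>"
    proof (rule ccontr)
      assume "x \<noteq> \<infinity>"
      then obtain m :: nat where "x < of_nat m"
        using ennreal_Ex_less_of_nat[of x] by (auto simp: top.not_eq_extremum)
      then show False using less[rule_format, of m] by (simp add: ennreal_of_nat_eq_real_of_nat)
    qed
  qed (simp add: ennreal_less_top)
  then have "(\<Inter>m. ?U m) = {y \<in> space M. f y = \<infinity>}"
    by auto
  moreover have "emeasure M {y \<in> space M. f y = \<infinity>} = 0"
    using nn_integral_PInf[OF f] f_finite by (simp add: vimage_def Int_def conj_commute)
  ultimately have null: "emeasure (density M f) (\<Inter>m. ?U m) = 0"
    by (simp add: emeasure_density nn_integral_null_set null_setsI)
  have "emeasure (density M f) (?U m) \<noteq> \<infinity>" for m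
  proof -
    have "emeasure (density M f) (?U m) \<le> emeasure (density M f) (space M)"
      by (intro emeasure_mono) auto
    then show ?thesis
      using f_finite by (auto simp: emeasure_density top_unique indicator_def cong: nn_integral_cong)
  qed
  moreover have "?U m' \<subseteq> ?U m" if "m \<le> m'" for m m'
    using that by (auto intro: le_less_trans[OF ennreal_leI[OF of_nat_mono]])
  ultimately have "(INF m. emeasure (density M f) (?U m)) = emeasure (density M f) (\<Inter>m. ?U m)"
    by (intro INF_emeasure_decseq) (auto intro!: antimonoI)
  with null have "(INF m. emeasure (density M f) (?U m)) < c"
    using c by simp
  then show ?thesis
    by (simp add: INF_less_iff)
qed

lemma exists_density_threshold:
  fixes f :: "'a \<Rightarrow> ennreal"
  assumes f[measurable]: "f \<in> borel_measurable M"
    and s: "0 < s" "ennreal s < (\<integral>\<^sup>+y. f y \<partial>M)" and f_finite: "(\<integral>\<^sup>+y. f y \<partial>M) < \<infinity>"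
  shows "\<exists>l>0. emeasure (density M f) {y \<in> space M. ennreal l < f y} \<le> ennreal s \<and>
               ennreal s \<le> emeasure (density M f) {y \<in> space M. ennreal l \<le> f y}"
proof -
  let ?N = "density M f"
  define U where "U p = {y \<in> space M. ennreal p < f y}" for p :: real
  have U_sets: "U p \<in> sets ?N" for p
    unfolding U_def sets_density by measurable
  have U_antimono: "U q \<subseteq> U p" if "p \<le> q" for p q
    using that by (auto simp: U_def intro: le_less_trans[OF ennreal_leI])
  have U_finite: "emeasure ?N (U p) \<noteq> \<infinity>" for p
  proof -
    have "emeasure ?N (U p) \<le> emeasure ?N (space M)"
      using U_sets by (intro emeasure_mono) (auto simp: U_def)
    then show ?thesis
      using f_finite by (auto simp: emeasure_density top_unique indicator_def cong: nn_integral_cong)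
  qed
  obtain m0 :: nat where m0: "ennreal s < emeasure ?N (U (1 / Suc m0))"
    using emeasure_density_superlevel_gt[OF f s(2)] by (auto simp: U_def)
  obtain m1 :: nat where m1: "emeasure ?N (U (real m1)) < ennreal s"
    using emeasure_density_superlevel_lt[OF f f_finite, of "ennreal s"] s(1) by (auto simp: U_def)
  obtain l where l: "1 / Suc m0 \<le> l" "emeasure ?N (\<Union>q\<in>{l<..}. U q) \<le> ennreal s"
    "ennreal s \<le> emeasure ?N (\<Inter>q\<in>{..<l}. U q)"
    using emeasure_threshold_crossing[OF U_sets U_finite U_antimono less_imp_le[OF m0] m1] by blast
  have "0 < 1 / real (Suc m0)" by simp
  then have "0 < l" using l(1) by linarith
  moreover have "(\<Union>q\<in>{l<..}. U q) = {y \<in> space M. ennreal l < f y}"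
    using ennreal_less_iff_ex_real_less[of l] \<open>0 < l\<close> by (auto simp: U_def)
  moreover have "(\<Inter>q\<in>{..<l}. U q) = {y \<in> space M. ennreal l \<le> f y}"
    using ennreal_le_iff_all_real_less[of l] \<open>0 < l\<close> by (auto simp: U_def)
  ultimately show ?thesis using l by auto
qed

lemma emeasure_intermediate_value:
  fixes N :: "'a measure" and S :: "real \<Rightarrow> 'a set"
  assumes S_sets: "\<And>p. S p \<in> sets N" and S_finite: "\<And>p. emeasure N (S p) \<noteq> \<infinity>"
    and S_antimono: "\<And>p q. p \<le> q \<Longrightarrow> S q \<subseteq> S p"
    and right_continuous: "\<And>p. (\<Union>q\<in>{p<..}. S q) = S p"
    and jump_null: "\<And>p. \<exists>Z \<in> null_sets N. (\<Inter>q\<in>{..<p}. S q) \<subseteq> S p \<union> Z"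
    and above: "c < emeasure N (\<Union>m. S (- real m))" and below: "emeasure N (\<Inter>m. S (real m)) < c"
  shows "\<exists>p. emeasure N (S p) = c"
proof -
  have "emeasure N (\<Union>m. S (- real m)) = (SUP m. emeasure N (S (- real m)))"
    using S_sets by (intro SUP_emeasure_incseq[symmetric]) (auto intro!: monoI S_antimono)
  then obtain a :: nat where a: "c < emeasure N (S (- real a))"
    using above by (auto simp: less_SUP_iff)
  have "emeasure N (\<Inter>m. S (real m)) = (INF m. emeasure N (S (real m)))"
    using S_sets S_finite by (intro INF_emeasure_decseq[symmetric]) (auto intro!: antimonoI S_antimono)
  then obtain b :: nat where b: "emeasure N (S (real b)) < c"
    using below by (auto simp: INF_less_iff)
  obtain p where p: "emeasure N (\<Union>q\<in>{p<..}. S q) \<le> c" "c \<le> emeasure N (\<Inter>q\<in>{..<p}. S q)"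
    using emeasure_threshold_crossing[OF S_sets S_finite S_antimono less_imp_le[OF a] b] by blast
  obtain Z where Z: "Z \<in> null_sets N" "(\<Inter>q\<in>{..<p}. S q) \<subseteq> S p \<union> Z"
    using jump_null by blast
  have "c \<le> emeasure N (S p \<union> Z)"
    using p(2) Z S_sets by (auto intro: order.trans[OF _ emeasure_mono])
  also have "\<dots> \<le> emeasure N (S p) + emeasure N Z"
    using S_sets Z(1) by (intro emeasure_subadditive) auto
  finally have "c \<le> emeasure N (S p)"
    using Z(1) by (simp add: null_setsD1)
  moreover have "emeasure N (S p) \<le> c"
    using p(1) right_continuous by simp
  ultimately show ?thesis by (intro exI[of _ p]) simp
qed

lemma INT_lessThan_superlevel_subset:
  fixes g :: "'a \<Rightarrow> real"
  shows "(\<Inter>q\<in>{..<r}. G \<union> {y \<in> G'. q < g y}) \<subseteq> G \<union> {y \<in> G'. r \<le> g y}"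
proof
  fix y assume y: "y \<in> (\<Inter>q\<in>{..<r}. G \<union> {y \<in> G'. q < g y})"
  show "y \<in> G \<union> {y \<in> G'. r \<le> g y}"
  proof (cases "y \<in> G")
    case False
    have "q \<le> g y" if "q < r" for q
      using y that False by auto
    then have "r \<le> g y" by (rule dense_le)
    moreover have "y \<in> G \<union> {y \<in> G'. r - 1 < g y}" using INT_D[OF y, of "r - 1"] by simp
    then have "y \<in> G'" using False by simp
    ultimately show ?thesis by simp
  qed simp
qed

lemma exists_emeasure_between:
  fixes N :: "'a measure" and g :: "'a \<Rightarrow> real"
  assumes G: "G \<in> sets N" "G' \<in> sets N" "G \<subseteq> G'" and G'_finite: "emeasure N G' \<noteq> \<infinity>"
    and between: "emeasure N G \<le> c" "c \<le> emeasure N G'"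
    and g[measurable]: "g \<in> borel_measurable N"
    and g_null: "\<And>r. emeasure N {y \<in> space N. g y = r} = 0"
  shows "\<exists>T \<in> sets N. G \<subseteq> T \<and> T \<subseteq> G' \<and> emeasure N T = c"
proof (cases "emeasure N G = c \<or> emeasure N G' = c")
  case True
  then show ?thesis using G by auto
next
  case False
  then have strict: "emeasure N G < c" "c < emeasure N G'"
    using between by (auto simp: order.order_iff_strict)
  define U where "U r = G \<union> {y \<in> G'. r < g y}" for r :: real
  have G'_space: "G' \<subseteq> space N" using sets.sets_into_space[OF G(2)] .
  have U_sets: "U r \<in> sets N" for r
  proof -
    have "{y \<in> G'. r < g y} = G' \<inter> {y \<in> space N. r < g y}" using G'_space by auto
    then show ?thesis unfolding U_def using G by simp
  qed
  have U_finite: "emeasure N (U r) \<noteq> \<infinity>" for r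
  proof -
    have "emeasure N (U r) \<le> emeasure N G'"
      using U_sets G by (intro emeasure_mono) (auto simp: U_def)
    then show ?thesis using G'_finite by (auto simp: top_unique)
  qed
  have U_antimono: "U q \<subseteq> U p" if "p \<le> q" for p q
    using that by (auto simp: U_def)
  have "\<exists>m::nat. - real m < x" for x :: real
    using reals_Archimedean2[of "- x"] by (metis minus_less_iff)
  then have U_Union: "(\<Union>m. U (- real m)) = G'"
    using G(3) by (auto simp: U_def)
  have "\<not> (\<forall>m::nat. real m < x)" for x :: real
    using reals_Archimedean2[of x] by (meson less_asym)
  then have U_Inter: "(\<Inter>m. U (real m)) = G"
    by (auto simp: U_def)
  have right_continuous: "(\<Union>q\<in>{r<..}. U q) = U r" for r
    by (auto simp: U_def dest: dense)
  have jump: "(\<Inter>q\<in>{..<r}. U q) \<subseteq> U r \<union> {y \<in> space N. g y = r}" for r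
    using INT_lessThan_superlevel_subset[of G G' g r] G'_space by (auto simp: U_def)
  have "{y \<in> space N. g y = r} \<in> null_sets N" for r
    using g_null by (auto intro: null_setsI)
  with jump have jump_null: "\<exists>Z \<in> null_sets N. (\<Inter>q\<in>{..<r}. U q) \<subseteq> U r \<union> Z" for r
    by blast
  obtain r where "emeasure N (U r) = c"
    using emeasure_intermediate_value[OF U_sets U_finite U_antimono right_continuous jump_null]
      strict U_Union U_Inter by auto
  moreover have "G \<subseteq> U r" "U r \<subseteq> G'"
    using G(3) by (auto simp: U_def)
  ultimately show ?thesis
    using U_sets by blast
qed

lemma exists_level_set:
  fixes f :: "'a \<Rightarrow> ennreal" and g :: "'a \<Rightarrow> real"
  assumes f[measurable]: "f \<in> borel_measurable M" and g[measurable]: "g \<in> borel_measurable M"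
    and s: "0 < s" "ennreal s < (\<integral>\<^sup>+y. f y \<partial>M)" "(\<integral>\<^sup>+y. f y \<partial>M) < \<infinity>"
    and g_null: "\<And>r. emeasure M {y \<in> space M. g y = r} = 0"
  shows "\<exists>l>0. \<exists>S \<in> sets M. (\<forall>y\<in>S. ennreal l \<le> f y) \<and> (\<forall>y \<in> space M - S. f y \<le> ennreal l) \<and>
           (\<integral>\<^sup>+y. f y * indicator S y \<partial>M) = ennreal s \<and> emeasure M S < \<infinity>"
proof -
  let ?N = "density M f"
  have emeasure_N: "emeasure ?N X = (\<integral>\<^sup>+y. f y * indicator X y \<partial>M)" if "X \<in> sets M" for X
    using that by (simp add: emeasure_density)
  obtain l where l: "0 < l" "emeasure ?N {y \<in> space M. ennreal l < f y} \<le> ennreal s"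
    "ennreal s \<le> emeasure ?N {y \<in> space M. ennreal l \<le> f y}"
    using exists_density_threshold[OF f s] by blast
  have "emeasure ?N {y \<in> space M. ennreal l \<le> f y} \<le> emeasure ?N (space M)"
    by (intro emeasure_mono) auto
  also have "emeasure ?N (space M) = (\<integral>\<^sup>+y. f y \<partial>M)"
    by (simp add: emeasure_N indicator_def cong: nn_integral_cong)
  finally have upper_finite: "emeasure ?N {y \<in> space M. ennreal l \<le> f y} \<noteq> \<infinity>"
    using s(3) by (auto simp: top_unique)
  have g_null_N: "emeasure ?N {y \<in> space ?N. g y = r} = 0" for r
    using g_null[of r] by (simp add: emeasure_N nn_integral_null_set null_setsI)
  have "g \<in> borel_measurable ?N" by simp
  moreover have "{y \<in> space M. ennreal l < f y} \<subseteq> {y \<in> space M. ennreal l \<le> f y}"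
    by (auto intro: less_imp_le)
  moreover have "{y \<in> space M. ennreal l < f y} \<in> sets ?N" "{y \<in> space M. ennreal l \<le> f y} \<in> sets ?N"
    by auto
  ultimately obtain S where S: "S \<in> sets M" "{y \<in> space M. ennreal l < f y} \<subseteq> S"
    "S \<subseteq> {y \<in> space M. ennreal l \<le> f y}" "emeasure ?N S = ennreal s"
    using exists_emeasure_between[OF _ _ _ upper_finite l(2,3) _ g_null_N] by auto
  have "ennreal l * emeasure M S = (\<integral>\<^sup>+y. ennreal l * indicator S y \<partial>M)"
    using S(1) by (simp add: nn_integral_cmult_indicator)
  also have "\<dots> \<le> (\<integral>\<^sup>+y. f y * indicator S y \<partial>M)"
    using S(3) by (intro nn_integral_mono) (auto simp: indicator_def)
  also have "\<dots> = ennreal s" using S(1,4) emeasure_N by simp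
  finally have "ennreal l * emeasure M S \<noteq> \<infinity>"
    by (auto simp: top_unique)
  then have "emeasure M S < \<infinity>"
    using l(1) by (auto simp: ennreal_mult_eq_top_iff less_top)
  moreover have "\<forall>y \<in> space M - S. f y \<le> ennreal l"
    using S(2) by (auto simp: not_less)
  ultimately show ?thesis
    using l(1) S emeasure_N by (intro exI[of _ l] conjI bexI[of _ S]) auto
qed

lemma bathtub_emeasure_le:
  fixes f :: "'a \<Rightarrow> ennreal"
  assumes f: "f \<in> borel_measurable M" and S: "S \<in> sets M" and P: "P \<in> sets M" and l: "0 < l"
    and above: "\<And>y. y \<in> S \<Longrightarrow> ennreal l \<le> f y"
    and below: "\<And>y. y \<in> space M - S \<Longrightarrow> f y \<le> ennreal l"
    and integral_le: "(\<integral>\<^sup>+y. f y * indicator S y \<partial>M) \<le> (\<integral>\<^sup>+y. f y * indicator P y \<partial>M)"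
    and integral_finite: "(\<integral>\<^sup>+y. f y * indicator S y \<partial>M) < \<infinity>"
  shows "emeasure M S \<le> emeasure M P"
proof -
  define I where "I X = (\<integral>\<^sup>+y. f y * indicator X y \<partial>M)" for X
  have I_split: "I X = I (X \<inter> Y) + I (X - Y)" if "X \<in> sets M" "Y \<in> sets M" for X Y
    unfolding I_def using that f
    by (subst nn_integral_add[symmetric]) (auto intro!: nn_integral_cong simp: indicator_def)
  have "I (S \<inter> P) \<noteq> \<infinity>"
    using I_split[OF S P] integral_finite by (auto simp: I_def top_unique)
  then have "I (S - P) \<le> I (P - S)"
    using integral_le I_split[OF S P] I_split[OF P S]
    by (simp add: I_def Int_commute ennreal_add_left_cancel_le)
  have "ennreal l * emeasure M (S - P) = (\<integral>\<^sup>+y. ennreal l * indicator (S - P) y \<partial>M)"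
    using S P by (simp add: nn_integral_cmult_indicator)
  also have "\<dots> \<le> I (S - P)"
    unfolding I_def by (intro nn_integral_mono) (auto simp: indicator_def above)
  also have "\<dots> \<le> I (P - S)" by fact
  also have "\<dots> \<le> (\<integral>\<^sup>+y. ennreal l * indicator (P - S) y \<partial>M)"
    unfolding I_def using sets.sets_into_space[OF P]
    by (intro nn_integral_mono) (auto simp: indicator_def intro!: below)
  also have "\<dots> = ennreal l * emeasure M (P - S)"
    using S P by (simp add: nn_integral_cmult_indicator)
  finally have "emeasure M (S - P) \<le> emeasure M (P - S)"
    using l by (simp add: ennreal_mult_le_mult_iff)
  then have "emeasure M (S \<inter> P) + emeasure M (S - P) \<le> emeasure M (P \<inter> S) + emeasure M (P - S)"
    by (simp add: Int_commute add_left_mono)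
  moreover have "emeasure M (X \<inter> Y) + emeasure M (X - Y) = emeasure M X"
    if "X \<in> sets M" "Y \<in> sets M" for X Y
    using that by (subst plus_emeasure) (auto intro: arg_cong[where f="emeasure M"])
  ultimately show ?thesis
    using S P by metis
qed

section \<open>Fibres in one coordinate direction\<close>

interpretation lborel_product: product_sigma_finite "\<lambda>_::nat. lborel :: real measure"
  by standard

definition fibre_measure :: "nat set \<Rightarrow> nat \<Rightarrow> (nat \<Rightarrow> real) set \<Rightarrow> (nat \<Rightarrow> real) \<Rightarrow> ennreal" where
  "fibre_measure H j B y =
     emeasure (product_lborel {j}) ((\<lambda>x. merge H {j} (y, x)) -` B \<inter> space (product_lborel {j}))"

lemma emeasure_eq_nn_integral_fibre_measure:
  "finite H \<Longrightarrow> j \<notin> H \<Longrightarrow> B \<in> sets (product_lborel (H \<union> {j})) \<Longrightarrow>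
    emeasure (product_lborel (H \<union> {j})) B = (\<integral>\<^sup>+y. fibre_measure H j B y \<partial>product_lborel H)"
  unfolding fibre_measure_def by (rule lborel_product.emeasure_fold_integral) auto

lemma borel_measurable_fibre_measure:
  "finite H \<Longrightarrow> j \<notin> H \<Longrightarrow> B \<in> sets (product_lborel (H \<union> {j})) \<Longrightarrow>
    fibre_measure H j B \<in> borel_measurable (product_lborel H)"
  unfolding fibre_measure_def[abs_def] by (rule lborel_product.emeasure_fold_measurable) auto

lemma fibre_measure_mono:
  assumes "B \<subseteq> B'" "B' \<in> sets (product_lborel (H \<union> {j}))" "y \<in> space (product_lborel H)"
  shows "fibre_measure H j B y \<le> fibre_measure H j B' y"
proof -
  have "(\<lambda>x. merge H {j} (y, x)) \<in> measurable (product_lborel {j}) (product_lborel (H \<union> {j}))"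
    using assms(3) by measurable
  then show ?thesis
    unfolding fibre_measure_def using assms(1,2) by (intro emeasure_mono measurable_sets) auto
qed

lemma restrict_merge_left:
  "y \<in> space (product_lborel H) \<Longrightarrow> restrict (merge H {j} (y, x)) H = y"
  by (auto simp: space_PiM merge_def PiE_def extensional_def fun_eq_iff)

lemma fibre_measure_eq_0_outside_projection:
  assumes "y \<in> space (product_lborel H)" "y \<notin> (\<lambda>x. restrict x H) ` B"
  shows "fibre_measure H j B y = 0"
proof -
  have "merge H {j} (y, x) \<notin> B" for x
    using assms restrict_merge_left[OF assms(1)] by (metis image_eqI)
  then have "(\<lambda>x. merge H {j} (y, x)) -` B = {}" by blast
  then show ?thesis by (simp add: fibre_measure_def)
qed

lemma fibre_measure_Int_cylinder:
  "y \<in> space (product_lborel H) \<Longrightarrow>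
    fibre_measure H j (B \<inter> {x. restrict x H \<in> S}) y = fibre_measure H j B y * indicator S y"
  using restrict_merge_left[of y H] by (auto simp: fibre_measure_def indicator_def)

lemma emeasure_coordinate_hyperplane:
  assumes "k \<in> H" "finite H"
  shows "emeasure (product_lborel H) {y \<in> space (product_lborel H). y k = r} = 0"
proof -
  have "{y \<in> space (product_lborel H). y k = r} = PiE H (\<lambda>i. if i = k then {r} else UNIV)"
    using assms(1) by (auto simp: space_PiM PiE_def Pi_def split: if_splits)
  moreover have "emeasure (product_lborel H) (PiE H (\<lambda>i. if i = k then {r} else UNIV)) =
      (\<Prod>i\<in>H. emeasure lborel (if i = k then {r} else UNIV))"
    using assms(2) by (intro lborel_product.emeasure_PiM) auto
  moreover have "(\<Prod>i\<in>H. emeasure lborel (if i = k then {r :: real} else UNIV)) = 0"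
    using assms by (intro prod_zero) auto
  ultimately show ?thesis by simp
qed

lemma emeasure_Int_cylinder:
  assumes H: "finite H" "j \<notin> H" and F: "F \<in> sets (product_lborel (H \<union> {j}))"
    and S: "S \<in> sets (product_lborel H)"
  shows "emeasure (product_lborel (H \<union> {j})) (F \<inter> {x. restrict x H \<in> S}) =
    (\<integral>\<^sup>+y. fibre_measure H j F y * indicator S y \<partial>product_lborel H)"
proof -
  have "(\<lambda>x. restrict x H) \<in> measurable (product_lborel (H \<union> {j})) (product_lborel H)"
    by (rule measurable_restrict_subset) auto
  then have "(\<lambda>x. restrict x H) -` S \<inter> space (product_lborel (H \<union> {j})) \<in> sets (product_lborel (H \<union> {j}))"
    using S by (rule measurable_sets)
  moreover have "F \<inter> {x. restrict x H \<in> S} = F \<inter> ((\<lambda>x. restrict x H) -` S \<inter> space (product_lborel (H \<union> {j})))"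
    using sets.sets_into_space[OF F] by auto
  ultimately have "F \<inter> {x. restrict x H \<in> S} \<in> sets (product_lborel (H \<union> {j}))"
    using F by simp
  then have "emeasure (product_lborel (H \<union> {j})) (F \<inter> {x. restrict x H \<in> S}) =
      (\<integral>\<^sup>+y. fibre_measure H j (F \<inter> {x. restrict x H \<in> S}) y \<partial>product_lborel H)"
    by (rule emeasure_eq_nn_integral_fibre_measure[OF H])
  also have "\<dots> = (\<integral>\<^sup>+y. fibre_measure H j F y * indicator S y \<partial>product_lborel H)"
    by (intro nn_integral_cong fibre_measure_Int_cylinder)
  finally show ?thesis .
qed

lemma level_set_emeasure_le_projection:
  assumes H: "finite H" "j \<notin> H" and F: "F \<in> sets (product_lborel (H \<union> {j}))"
    and l: "0 < l" and S: "S \<in> sets (product_lborel H)"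
    and above: "\<And>y. y \<in> S \<Longrightarrow> ennreal l \<le> fibre_measure H j F y"
    and below: "\<And>y. y \<in> space (product_lborel H) - S \<Longrightarrow> fibre_measure H j F y \<le> ennreal l"
    and S_integral: "(\<integral>\<^sup>+y. fibre_measure H j F y * indicator S y \<partial>product_lborel H) = ennreal s"
    and A: "A \<in> sets (product_lborel (H \<union> {j}))" "A \<subseteq> F"
      "ennreal s \<le> emeasure (product_lborel (H \<union> {j})) A"
    and P: "P \<in> sets (product_lborel H)" "(\<lambda>x. restrict x H) ` A \<subseteq> P"
  shows "emeasure (product_lborel H) S \<le> emeasure (product_lborel H) P"
proof -
  let ?f = "fibre_measure H j F"
  have "ennreal s \<le> (\<integral>\<^sup>+y. fibre_measure H j A y \<partial>product_lborel H)"
    using A(3) emeasure_eq_nn_integral_fibre_measure[OF H A(1)] by simp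
  also have "\<dots> \<le> (\<integral>\<^sup>+y. ?f y * indicator P y \<partial>product_lborel H)"
  proof (rule nn_integral_mono)
    fix y assume y: "y \<in> space (product_lborel H)"
    show "fibre_measure H j A y \<le> ?f y * indicator P y"
    proof (cases "y \<in> P")
      case True
      then show ?thesis using fibre_measure_mono[OF A(2) F y] by simp
    next
      case False
      then have "y \<notin> (\<lambda>x. restrict x H) ` A" using P(2) by blast
      then show ?thesis using fibre_measure_eq_0_outside_projection[OF y] by simp
    qed
  qed
  finally have "(\<integral>\<^sup>+y. ?f y * indicator S y \<partial>product_lborel H)
      \<le> (\<integral>\<^sup>+y. ?f y * indicator P y \<partial>product_lborel H)"
    using S_integral by simp
  moreover have "(\<integral>\<^sup>+y. ?f y * indicator S y \<partial>product_lborel H) < \<infinity>"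
    using S_integral by simp
  ultimately show ?thesis
    using bathtub_emeasure_le[OF borel_measurable_fibre_measure[OF H F] S P(1) l above below]
    by blast
qed

lemma exists_fibre_level_set:
  assumes H: "finite H" "j \<notin> H" and k: "k \<in> H" and F: "F \<in> sets (product_lborel (H \<union> {j}))"
    and s: "0 < s" "ennreal s < emeasure (product_lborel (H \<union> {j})) F"
    and F_finite: "emeasure (product_lborel (H \<union> {j})) F < \<infinity>"
  shows "\<exists>l>0. \<exists>S \<in> sets (product_lborel H). (\<forall>y\<in>S. ennreal l \<le> fibre_measure H j F y) \<and>
     (\<forall>y \<in> space (product_lborel H) - S. fibre_measure H j F y \<le> ennreal l) \<and>
     (\<integral>\<^sup>+y. fibre_measure H j F y * indicator S y \<partial>product_lborel H) = ennreal s \<and>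
     emeasure (product_lborel H) S < \<infinity>"
proof -
  have "(\<lambda>y. y k) \<in> borel_measurable (product_lborel H)"
    using k by measurable
  moreover have "ennreal s < (\<integral>\<^sup>+y. fibre_measure H j F y \<partial>product_lborel H)"
    "(\<integral>\<^sup>+y. fibre_measure H j F y \<partial>product_lborel H) < \<infinity>"
    using s(2) F_finite unfolding emeasure_eq_nn_integral_fibre_measure[OF H F] .
  ultimately show ?thesis
    using exists_level_set[OF borel_measurable_fibre_measure[OF H F] _ s(1) _ _
        emeasure_coordinate_hyperplane[OF k H(1)]] by blast
qed

section \<open>The halving step\<close>

lemma Fsigma_Rn_iff: "Fsigma_Rn n X \<longleftrightarrow> fsigma_in (product_euclidean {1..n}) X"
  by (simp add: Fsigma_Rn_def Rn_top_def)

lemma emeasure_Rn_meas: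
  "Fsigma_Rn n X \<Longrightarrow> emeasure (Rn_meas n) X = emeasure (product_lborel {1..n}) X"
  by (simp add: Rn_meas_def Fsigma_Rn_iff fsigma_in_imp_sets_product_lborel)

lemma mes_hyp_proj_k:
  assumes "Fsigma_Rn n X"
  shows "mes_hyp n j (proj_k n j X) =
    emeasure (product_lborel ({1..n} - {j})) ((\<lambda>x. restrict x ({1..n} - {j})) ` X)"
proof -
  have "fsigma_in (product_euclidean ({1..n} - {j})) ((\<lambda>x. restrict x ({1..n} - {j})) ` X)"
    using assms by (intro fsigma_in_restrict_image) (auto simp: Fsigma_Rn_iff)
  then show ?thesis
    by (simp add: mes_hyp_def proj_k_def fsigma_in_imp_sets_product_lborel)
qed

definition minimal_projection_subset ::
    "nat \<Rightarrow> nat \<Rightarrow> real \<Rightarrow> (nat \<Rightarrow> real) set \<Rightarrow> (nat \<Rightarrow> real) set \<Rightarrow> bool" where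
  "minimal_projection_subset n j s F G \<longleftrightarrow>
     G \<subseteq> F \<and> Fsigma_Rn n G \<and> emeasure (Rn_meas n) G = ennreal s \<and>
     (\<forall>A. Fsigma_Rn n A \<and> A \<subseteq> F \<and> ennreal s \<le> emeasure (Rn_meas n) A \<longrightarrow>
        mes_hyp n j (proj_k n j G) \<le> mes_hyp n j (proj_k n j A))"

lemma exists_Fsigma_cylinder_subset:
  assumes j: "j \<in> {1..n}" and F: "Fsigma_Rn n F"
    and S: "S \<in> sets (product_lborel ({1..n} - {j}))"
      "emeasure (product_lborel ({1..n} - {j})) S < \<infinity>"
  shows "\<exists>G \<subseteq> F. Fsigma_Rn n G \<and> (\<lambda>x. restrict x ({1..n} - {j})) ` G \<subseteq> S \<and>
    emeasure (Rn_meas n) G = (\<integral>\<^sup>+y. fibre_measure ({1..n} - {j}) j F y * indicator S y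
      \<partial>product_lborel ({1..n} - {j}))"
proof -
  define H where "H = {1..n} - {j}"
  have H: "finite H" "j \<notin> H" and H_insert: "H \<union> {j} = {1..n}" and "H \<subseteq> {1..n}"
    using j by (auto simp: H_def)
  have F_sets: "F \<in> sets (product_lborel (H \<union> {j}))"
    unfolding H_insert using F by (simp add: Fsigma_Rn_iff fsigma_in_imp_sets_product_lborel)
  obtain S' where S': "fsigma_in (product_euclidean H) S'" "S' \<subseteq> S"
    "S - S' \<in> null_sets (product_lborel H)"
    using fsigma_inner_approx_product_lborel[OF S[folded H_def]] by blast
  define G where "G = F \<inter> {x. restrict x H \<in> S'}"
  have "F \<subseteq> topspace (product_euclidean {1..n})"
    using F by (intro fsigma_in_subset) (simp add: Fsigma_Rn_iff)
  then have "G = F \<inter> {x \<in> topspace (product_euclidean {1..n}). restrict x H \<in> S'}"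
    unfolding G_def by blast
  then have G_Fsigma: "Fsigma_Rn n G"
    using F fsigma_in_restrict_preimage[OF S'(1) \<open>H \<subseteq> {1..n}\<close>]
    by (simp add: Fsigma_Rn_iff fsigma_in_Int)
  have "emeasure (product_lborel (H \<union> {j})) G =
      (\<integral>\<^sup>+y. fibre_measure H j F y * indicator S' y \<partial>product_lborel H)"
    unfolding G_def
    by (rule emeasure_Int_cylinder[OF H F_sets fsigma_in_imp_sets_product_lborel[OF S'(1)]])
  also have "\<dots> = (\<integral>\<^sup>+y. fibre_measure H j F y * indicator S y \<partial>product_lborel H)"
    using AE_not_in[OF S'(3)] S'(2)
    by (intro nn_integral_cong_AE) (auto elim!: eventually_mono simp: indicator_def)
  finally have "emeasure (Rn_meas n) G =
      (\<integral>\<^sup>+y. fibre_measure H j F y * indicator S y \<partial>product_lborel H)"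
    unfolding H_insert using emeasure_Rn_meas[OF G_Fsigma] by simp
  moreover have "(\<lambda>x. restrict x H) ` G \<subseteq> S"
    using S'(2) by (auto simp: G_def)
  ultimately show ?thesis
    using G_Fsigma by (intro exI[of _ G]) (auto simp: G_def H_def)
qed

lemma exists_minimal_projection_subset:
  assumes n: "2 \<le> n" and j: "j \<in> {1..n}" and F: "Fsigma_Rn n F"
    and F_measure: "emeasure (Rn_meas n) F = ennreal (2 * s)" and s: "0 < s"
  shows "\<exists>G. minimal_projection_subset n j s F G"
proof -
  define H where "H = {1..n} - {j}"
  have H: "finite H" "j \<notin> H" and H_insert: "H \<union> {j} = {1..n}" and "H \<subseteq> {1..n}"
    using j by (auto simp: H_def)
  have sets_eq: "X \<in> sets (product_lborel (H \<union> {j}))"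
    and emeasure_eq: "emeasure (Rn_meas n) X = emeasure (product_lborel (H \<union> {j})) X"
    if "Fsigma_Rn n X" for X
    unfolding H_insert using that by (simp_all add: emeasure_Rn_meas Fsigma_Rn_iff
        fsigma_in_imp_sets_product_lborel)
  \<comment> \<open>The tie-breaking coordinate k: this is where n \<ge> 2 is used.\<close>
  obtain k where "k \<in> H"
    using n by (cases "j = 1") (auto simp: H_def intro: that[of 1] that[of 2])
  have "emeasure (product_lborel (H \<union> {j})) F = ennreal (2 * s)"
    using F_measure emeasure_eq[OF F] by simp
  then have "ennreal s < emeasure (product_lborel (H \<union> {j})) F"
    "emeasure (product_lborel (H \<union> {j})) F < \<infinity>"
    using s by (simp_all add: ennreal_less_iff)
  then obtain l S where l: "0 < l" and S: "S \<in> sets (product_lborel H)"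
    and above: "\<forall>y\<in>S. ennreal l \<le> fibre_measure H j F y"
    and below: "\<forall>y\<in>space (product_lborel H) - S. fibre_measure H j F y \<le> ennreal l"
    and S_integral: "(\<integral>\<^sup>+y. fibre_measure H j F y * indicator S y \<partial>product_lborel H) = ennreal s"
    and S_finite: "emeasure (product_lborel H) S < \<infinity>"
    using exists_fibre_level_set[OF H \<open>k \<in> H\<close> sets_eq[OF F] s] by blast
  obtain G where G: "G \<subseteq> F" "Fsigma_Rn n G" "(\<lambda>x. restrict x H) ` G \<subseteq> S"
    "emeasure (Rn_meas n) G = ennreal s"
    using exists_Fsigma_cylinder_subset[OF j F S[unfolded H_def] S_finite[unfolded H_def]] S_integral
    by (auto simp: H_def)
  have "mes_hyp n j (proj_k n j G) \<le> mes_hyp n j (proj_k n j A)"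
    if A: "Fsigma_Rn n A" "A \<subseteq> F" "ennreal s \<le> emeasure (Rn_meas n) A" for A
  proof -
    have "fsigma_in (product_euclidean H) ((\<lambda>x. restrict x H) ` A)"
      using A(1) \<open>H \<subseteq> {1..n}\<close> by (intro fsigma_in_restrict_image) (auto simp: Fsigma_Rn_iff)
    then have PA_sets: "(\<lambda>x. restrict x H) ` A \<in> sets (product_lborel H)"
      by (rule fsigma_in_imp_sets_product_lborel)
    have "emeasure (product_lborel H) ((\<lambda>x. restrict x H) ` G) \<le> emeasure (product_lborel H) S"
      using G(3) S by (rule emeasure_mono)
    also have "\<dots> \<le> emeasure (product_lborel H) ((\<lambda>x. restrict x H) ` A)"
      using above below A(3) emeasure_eq[OF A(1)]
      by (intro level_set_emeasure_le_projection[OF H sets_eq[OF F] l S _ _ S_integral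
            sets_eq[OF A(1)] A(2) _ PA_sets]) auto
    finally show ?thesis
      using G(2) A(1) by (simp add: mes_hyp_proj_k H_def)
  qed
  then show ?thesis
    using G by (auto simp: minimal_projection_subset_def)
qed

lemma exists_minimal_projection_chain:
  assumes n: "2 \<le> n" and E: "Fsigma_Rn n E" "emeasure (Rn_meas n) E = ennreal t" and t: "0 < t"
  shows "\<exists>Es. Es 0 = E \<and> (\<forall>i. Fsigma_Rn n (Es i) \<and> emeasure (Rn_meas n) (Es i) = ennreal (t / 2 ^ i)) \<and>
    (\<forall>j\<in>{1..n}. minimal_projection_subset n j (t / 2 ^ j) (Es (j - 1)) (Es j))"
proof -
  define P where "P i X \<longleftrightarrow> Fsigma_Rn n X \<and> emeasure (Rn_meas n) X = ennreal (t / 2 ^ i) \<and>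
    (i = 0 \<longrightarrow> X = E)" for i X
  \<comment> \<open>Only the first n steps matter; later ones merely keep the direction in range.\<close>
  define Q where "Q i X Y \<longleftrightarrow> minimal_projection_subset n (min (Suc i) n) (t / 2 ^ Suc i) X Y"
    for i X Y
  have "\<exists>Y. P (Suc i) Y \<and> Q i X Y" if "P i X" for i X
  proof -
    have "min (Suc i) n \<in> {1..n}" using n by auto
    moreover have "Fsigma_Rn n X" "emeasure (Rn_meas n) X = ennreal (2 * (t / 2 ^ Suc i))"
      using that by (simp_all add: P_def)
    moreover have "0 < t / 2 ^ Suc i" using t by simp
    ultimately obtain Y where "minimal_projection_subset n (min (Suc i) n) (t / 2 ^ Suc i) X Y"
      using exists_minimal_projection_subset[OF n] by blast
    then show ?thesis by (auto simp: P_def Q_def minimal_projection_subset_def)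
  qed
  moreover have "P 0 E" using E by (simp add: P_def)
  ultimately obtain Es where Es: "\<And>i. P i (Es i)" "\<And>i. Q i (Es i) (Es (Suc i))"
    using dependent_nat_choice[of P Q] by blast
  have "minimal_projection_subset n j (t / 2 ^ j) (Es (j - 1)) (Es j)" if j: "j \<in> {1..n}" for j
  proof -
    obtain i where "j = Suc i" "Suc i \<le> n" using j by (cases j) auto
    then show ?thesis using Es(2)[of i] by (simp add: Q_def)
  qed
  then show ?thesis
    using Es(1) by (intro exI[of _ Es]) (auto simp: P_def)
qed

theorem lemma2p3:
  fixes n :: nat and E :: "(nat \<Rightarrow> real) set" and t :: real
  assumes "n \<ge> 2"
    and "Fsigma_Rn n E"
    and "0 < t"
    and "emeasure (Rn_meas n) E = ennreal t"
  shows "\<exists>Es :: nat \<Rightarrow> (nat \<Rightarrow> real) set.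
           Es 0 = E \<and>
           (\<forall>j\<le>n. Fsigma_Rn n (Es j)) \<and>
           (\<forall>j<n. Es (Suc j) \<subseteq> Es j) \<and>
           (\<forall>j\<le>n. emeasure (Rn_meas n) (Es j) = ennreal (t / 2 ^ j)) \<and>
           (\<forall>j\<in>{1..n}. \<forall>A. Fsigma_Rn n A \<and> A \<subseteq> Es (j - 1) \<and>
                 emeasure (Rn_meas n) A \<ge> ennreal (t / 2 ^ j)
               \<longrightarrow> mes_hyp n j (proj_k n j (Es j)) \<le> mes_hyp n j (proj_k n j A))"
proof -
  obtain Es where Es: "Es 0 = E" "\<And>i. Fsigma_Rn n (Es i)"
    "\<And>i. emeasure (Rn_meas n) (Es i) = ennreal (t / 2 ^ i)"
    and step: "\<And>j. j \<in> {1..n} \<Longrightarrow> minimal_projection_subset n j (t / 2 ^ j) (Es (j - 1)) (Es j)"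
    using exists_minimal_projection_chain[OF assms(1,2,4,3)] by blast
  show ?thesis
  proof (intro exI[of _ Es] conjI allI impI ballI)
    fix j A
    assume "j \<in> {1..n}"
      and "Fsigma_Rn n A \<and> A \<subseteq> Es (j - 1) \<and> ennreal (t / 2 ^ j) \<le> emeasure (Rn_meas n) A"
    then show "mes_hyp n j (proj_k n j (Es j)) \<le> mes_hyp n j (proj_k n j A)"
      using step by (simp add: minimal_projection_subset_def)
  next
    fix j assume "j < n"
    then show "Es (Suc j) \<subseteq> Es j"
      using step[of "Suc j"] by (simp add: minimal_projection_subset_def)
  qed (use Es in simp_all)
qed

end
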